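(* Let $V:\mathbb{R}\to\mathbb{R}$ be convex and $L$-Lipschitz with $m:=e^{-V}$ a probability density. Let $0<c<C$ and $f\in\mathcal{P}_{c,C}$. Then there exist constants $0<c'<C'$, depending only on $c$, $C$ and $V$, such that every measure on the $W_2$-geodesic between $f$ and $m$ belongs to $\mathcal{P}_{c',C'}$.
   Context: For $0<a<b$, $\mathcal{P}_{a,b}:=\{g\in\mathcal{P}(\mathbb{R}):\ a\,m\le g\le b\,m\}$ (probability densities pointwise between $a\,m$ and $b\,m$). The $W_2$-geodesic between $m$ and $f$ is $(\mu_t)_{t\in[0,1]}$, $\mu_t=((1-t)\mathrm{id}+tT)_\# m$, where $T=F_f^{-1}\circ F_m$ is the monotone optimal transport map from $m$ to $f$ ($F$ denoting cumulative distribution functions). *)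

theory Defs
  imports "HOL-Probability.Probability"
begin

definition Pab :: "real \<Rightarrow> real \<Rightarrow> (real \<Rightarrow> real) \<Rightarrow> (real \<Rightarrow> real) set" where
  "Pab a b m = {g. g \<in> borel_measurable borel
      \<and> prob_space (density lborel (\<lambda>x. ennreal (g x)))
      \<and> (\<forall>x. a * m x \<le> g x \<and> g x \<le> b * m x)}"

definition cdf_of :: "(real \<Rightarrow> real) \<Rightarrow> real \<Rightarrow> real" where
  "cdf_of g x = measure (density lborel (\<lambda>y. ennreal (g y))) {..x}"

definition quantile_of :: "(real \<Rightarrow> real) \<Rightarrow> real \<Rightarrow> real" where
  "quantile_of g u = Inf {x. u \<le> cdf_of g x}"

definition ot_map :: "(real \<Rightarrow> real) \<Rightarrow> (real \<Rightarrow> real) \<Rightarrow> real \<Rightarrow> real" where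
  "ot_map m f x = quantile_of f (cdf_of m x)"

definition geodesic_pt :: "(real \<Rightarrow> real) \<Rightarrow> (real \<Rightarrow> real) \<Rightarrow> real \<Rightarrow> real measure" where
  "geodesic_pt m f t = distr (density lborel (\<lambda>x. ennreal (m x))) lborel
      (\<lambda>x. (1 - t) * x + t * ot_map m f x)"

end

theory Submission
  imports Defs
begin

(* In dimension one T = F_f^-1 o F_m satisfies F_f (T x) = F_m x, and the geodesic point mu_t
   is the push-forward of m under S_t = (1 - t) id + t T.
   Convexity and integrability of e^-V force V to grow at least linearly at both ends, so m has
   exponential tails; since c m <= f <= C m, the tails of F_f and F_m are comparable, and T moves
   every point by at most a constant D.  As V is L-Lipschitz, m varies at most by the factor
   exp (L (D + 1)) on any interval of length D + 1, so on intervals of length at most 1 each of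
   id, T and S_t changes m-masses only by bounded factors.  Summing over unit steps, S_t changes
   the m-mass of every interval by a factor between 1/kappa and kappa; hence
   m/kappa <= mu_t <= kappa m on all Borel sets, and the Radon-Nikodym density of mu_t lies in
   P_{1/kappa, kappa}. *)

section \<open>Distribution functions of densities\<close>

abbreviation lborel_density :: "(real \<Rightarrow> real) \<Rightarrow> real measure" where
  "lborel_density g \<equiv> density lborel (\<lambda>x. ennreal (g x))"

lemma measure_density_le_scaled:
  fixes w v :: "real \<Rightarrow> real"
  assumes [measurable]: "w \<in> borel_measurable borel" "v \<in> borel_measurable borel" "A \<in> sets borel"
    and fin: "finite_measure (lborel_density v)" and le: "\<And>x. w x \<le> k * v x" and k: "0 \<le> k"
  shows "measure (lborel_density w) A \<le> k * measure (lborel_density v) A"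
proof -
  have "emeasure (lborel_density w) A = (\<integral>\<^sup>+x. ennreal (w x) * indicator A x \<partial>lborel)"
    by (simp add: emeasure_density)
  also have "\<dots> \<le> (\<integral>\<^sup>+x. ennreal k * (ennreal (v x) * indicator A x) \<partial>lborel)"
    using le k by (intro nn_integral_mono) (auto simp: indicator_def ennreal_mult'[symmetric] intro: ennreal_leI)
  also have "\<dots> = ennreal k * emeasure (lborel_density v) A"
    by (simp add: nn_integral_cmult emeasure_density)
  also have "\<dots> = ennreal (k * measure (lborel_density v) A)"
    using fin k by (simp add: finite_measure.emeasure_eq_measure ennreal_mult')
  finally show ?thesis
    unfolding measure_def[of "lborel_density w"] using k by (intro enn2real_leI) auto
qed

lemma measure_density_Ioc_lower:
  fixes w :: "real \<Rightarrow> real"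
  assumes [measurable]: "w \<in> borel_measurable borel" and fin: "finite_measure (lborel_density w)"
    and "a \<le> b" "0 \<le> lo" and lower: "\<And>x. a < x \<Longrightarrow> x \<le> b \<Longrightarrow> lo \<le> w x"
  shows "lo * (b - a) \<le> measure (lborel_density w) {a<..b}"
proof -
  have "ennreal (lo * (b - a)) = (\<integral>\<^sup>+x. ennreal lo * indicator {a<..b} x \<partial>lborel)"
    using \<open>a \<le> b\<close> \<open>0 \<le> lo\<close> by (simp add: nn_integral_cmult_indicator ennreal_mult')
  also have "\<dots> \<le> (\<integral>\<^sup>+x. ennreal (w x) * indicator {a<..b} x \<partial>lborel)"
    using lower by (intro nn_integral_mono) (auto simp: indicator_def intro: ennreal_leI)
  also have "\<dots> = ennreal (measure (lborel_density w) {a<..b})"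
    using fin by (simp add: emeasure_density[symmetric] finite_measure.emeasure_eq_measure)
  finally show ?thesis by (simp add: ennreal_le_iff)
qed

lemma measure_density_Ioc_upper:
  fixes w :: "real \<Rightarrow> real"
  assumes [measurable]: "w \<in> borel_measurable borel" and fin: "finite_measure (lborel_density w)"
    and "a \<le> b" "0 \<le> hi" and upper: "\<And>x. a < x \<Longrightarrow> x \<le> b \<Longrightarrow> w x \<le> hi"
  shows "measure (lborel_density w) {a<..b} \<le> hi * (b - a)"
proof -
  have "ennreal (measure (lborel_density w) {a<..b}) = (\<integral>\<^sup>+x. ennreal (w x) * indicator {a<..b} x \<partial>lborel)"
    using fin by (simp add: emeasure_density[symmetric] finite_measure.emeasure_eq_measure)
  also have "\<dots> \<le> (\<integral>\<^sup>+x. ennreal hi * indicator {a<..b} x \<partial>lborel)"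
    using upper by (intro nn_integral_mono) (auto simp: indicator_def intro: ennreal_leI)
  also have "\<dots> = ennreal (hi * (b - a))"
    using \<open>a \<le> b\<close> \<open>0 \<le> hi\<close> by (simp add: nn_integral_cmult_indicator ennreal_mult')
  finally show ?thesis using \<open>a \<le> b\<close> \<open>0 \<le> hi\<close> by (simp add: ennreal_le_iff)
qed

lemma cdf_of_diff:
  assumes "finite_measure (lborel_density g)" and "a \<le> b"
  shows "cdf_of g b - cdf_of g a = measure (lborel_density g) {a<..b}"
proof -
  have "{a<..b} = {..b} - {..a}" by auto
  with assms show ?thesis
    by (simp add: cdf_of_def finite_measure.finite_measure_Diff)
qed

lemma mono_cdf_of:
  assumes "finite_measure (lborel_density g)"
  shows "mono (cdf_of g)"
  using assms by (simp add: mono_def cdf_of_def finite_measure.finite_measure_mono)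

lemma cdf_of_eq_cdf: "cdf_of g = cdf (lborel_density g)"
  by (simp add: fun_eq_iff cdf_of_def cdf_def)

lemma isCont_cdf_of:
  assumes "g \<in> borel_measurable borel" and "prob_space (lborel_density g)"
  shows "isCont (cdf_of g) x"
proof -
  interpret real_distribution "lborel_density g"
    using assms(2) by (simp add: real_distribution_def real_distribution_axioms_def)
  have "AE y in lborel. y \<in> {x} \<longrightarrow> ennreal (g y) = 0"
    using AE_lborel_singleton[of x] by eventually_elim auto
  moreover have "(\<lambda>y. ennreal (g y)) \<in> borel_measurable lborel"
    using assms(1) by simp
  ultimately have "{x} \<in> null_sets (lborel_density g)"
    by (simp add: null_sets_density_iff)
  then have "emeasure (lborel_density g) {x} = 0"
    by (rule null_setsD1)
  then have "measure (lborel_density g) {x} = 0"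
    by (simp add: measure_def)
  then show ?thesis
    by (simp add: cdf_of_eq_cdf isCont_cdf)
qed

lemma cdf_quantile_eq:
  assumes "real_distribution M" and u: "0 < u" "u < 1"
    and cont_q: "isCont (cdf M) (Inf {x. u \<le> cdf M x})"
  shows "cdf M (Inf {x. u \<le> cdf M x}) = u"
proof -
  interpret cdf_distribution M using assms(1) by (simp add: cdf_distribution_def)
  let ?q = "Inf {x. u \<le> cdf M x}"
  have "cdf M ?q \<le> u"
  proof (rule tendsto_upperbound)
    show "(cdf M \<longlongrightarrow> cdf M ?q) (at_left ?q)"
      using cont_q by (simp add: isCont_def filterlim_at_split)
    have "cdf M y \<le> u" if "y < ?q" for y
      using pseudoinverse[OF u, of y] that by simp
    then show "\<forall>\<^sub>F y in at_left ?q. cdf M y \<le> u"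
      by (intro eventually_at_leftI[of "?q - 1"]) auto
  qed simp
  with pseudoinverse[OF u, of ?q] show ?thesis by simp
qed

section \<open>Measures comparable on intervals\<close>

lemma emeasure_measure_of_add:
  assumes "sets P = sets M" and "B \<in> sets M"
  shows "emeasure (measure_of (space M) (sets M) (\<lambda>B. emeasure M B + emeasure P B)) B
    = emeasure M B + emeasure P B"
proof (rule emeasure_measure_of_sigma[OF sets.sigma_algebra_axioms _ _ assms(2)])
  show "positive (sets M) (\<lambda>B. emeasure M B + emeasure P B)"
    by (simp add: positive_def)
  show "countably_additive (sets M) (\<lambda>B. emeasure M B + emeasure P B)"
  proof (rule countably_additiveI)
    fix B :: "nat \<Rightarrow> 'a set" assume B: "range B \<subseteq> sets M" "disjoint_family B"
    have "(\<Sum>i. emeasure M (B i) + emeasure P (B i)) = (\<Sum>i. emeasure M (B i)) + (\<Sum>i. emeasure P (B i))"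
      by (rule suminf_add[symmetric]) auto
    also have "\<dots> = emeasure M (\<Union>i. B i) + emeasure P (\<Union>i. B i)"
      using B assms(1) by (simp add: suminf_emeasure)
    finally show "(\<Sum>i. emeasure M (B i) + emeasure P (B i)) = emeasure M (\<Union>i. B i) + emeasure P (\<Union>i. B i)" .
  qed
qed

(* The gap r * cdf N - cdf M is nondecreasing, hence the distribution function of a measure P
   with M + P = r N. *)
lemma emeasure_le_scaled_of_Ioc_le:
  fixes M N :: "real measure"
  assumes "finite_borel_measure M" and "finite_borel_measure N" and r: "0 \<le> r"
    and Ioc_le: "\<And>a b. a \<le> b \<Longrightarrow> measure M {a<..b} \<le> r * measure N {a<..b}"
    and A: "A \<in> sets borel"
  shows "emeasure M A \<le> ennreal r * emeasure N A"
proof -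
  interpret M: finite_borel_measure M by fact
  interpret N: finite_borel_measure N by fact
  define \<Phi> where "\<Phi> x = r * cdf N x - cdf M x" for x
  have \<Phi>_mono: "\<Phi> x \<le> \<Phi> y" if "x \<le> y" for x y
    using that Ioc_le[of x y] M.cdf_diff_eq[of x y] N.cdf_diff_eq[of x y]
    by (cases "x = y") (auto simp: \<Phi>_def algebra_simps)
  have \<Phi>_right_cont: "continuous (at_right a) \<Phi>" for a
    unfolding \<Phi>_def by (intro continuous_intros M.cdf_is_right_cont N.cdf_is_right_cont)
  define P where "P = interval_measure \<Phi>"
  define S where "S = measure_of (space M) (sets M) (\<lambda>B. emeasure M B + emeasure P B)"
  have emeasure_S: "emeasure S B = emeasure M B + emeasure P B" if "B \<in> sets borel" for B
    using that emeasure_measure_of_add[of P M B] by (simp add: S_def P_def M.M_is_borel)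
  have sets_S: "sets S = sets borel"
    unfolding S_def sigma_algebra.sets_measure_of_eq[OF sets.sigma_algebra_axioms] by (rule M.M_is_borel)
  have "S = scale_measure r N"
  proof (rule measure_eqI_generator_eq[where \<Omega>=UNIV and E="range (\<lambda>(a, b). {a<..b::real})"
        and A="\<lambda>i. {- real (i::nat)<..real i}"])
    fix X assume "X \<in> range (\<lambda>(a, b). {a<..b::real})"
    then obtain a b where X: "X = {a<..b}" by auto
    show "emeasure S X = emeasure (scale_measure r N) X"
    proof (cases "a \<le> b")
      case True
      have "emeasure S {a<..b} = ennreal (cdf M b - cdf M a) + ennreal (\<Phi> b - \<Phi> a)"
        using True by (simp add: emeasure_S M.emeasure_Ioc P_def emeasure_interval_measure_Ioc \<Phi>_mono \<Phi>_right_cont)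
      also have "\<dots> = ennreal (r * (cdf N b - cdf N a))"
        using True M.cdf_nondecreasing[OF True] \<Phi>_mono[OF True]
        by (subst ennreal_plus[symmetric]) (auto simp: \<Phi>_def algebra_simps)
      finally show ?thesis
        using True r by (simp add: X N.emeasure_Ioc ennreal_mult')
    qed (simp add: X)
  next
    show "(\<Union>i. {- real (i::nat)<..real i}) = UNIV"
      by (rule UN_Ioc_eq_UNIV)
  next
    fix i :: nat
    show "emeasure S {- real i<..real i} \<noteq> \<infinity>"
      by (simp add: emeasure_S P_def emeasure_interval_measure_Ioc \<Phi>_mono \<Phi>_right_cont M.emeasure_finite)
  qed (auto simp: sets_S N.M_is_borel borel_sigma_sets_Ioc Int_stable_def)
  moreover have "emeasure M A \<le> emeasure S A"
    using emeasure_S[OF A] by simp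
  ultimately show ?thesis by simp
qed

lemma (in finite_measure) AE_le_of_set_nn_integral_le:
  assumes [measurable]: "h \<in> borel_measurable M"
    and le: "\<And>A. A \<in> sets M \<Longrightarrow> (\<integral>\<^sup>+x. h x * indicator A x \<partial>M) \<le> ennreal q * emeasure M A"
  shows "AE x in M. h x \<le> ennreal q"
proof -
  define A where "A = {x \<in> space M. ennreal q < h x}"
  have A[measurable]: "A \<in> sets M" unfolding A_def by measurable
  have fin: "(\<integral>\<^sup>+x. ennreal q * indicator A x \<partial>M) \<noteq> \<infinity>"
    by (simp add: nn_integral_cmult_indicator ennreal_mult_eq_top_iff)
  have "AE x in M. h x * indicator A x \<le> ennreal q * indicator A x"
  proof (rule ccontr)
    assume "\<not> ?thesis"
    with fin have "(\<integral>\<^sup>+x. ennreal q * indicator A x \<partial>M) < (\<integral>\<^sup>+x. h x * indicator A x \<partial>M)"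
      by (intro nn_integral_less) (auto simp: A_def indicator_def intro!: AE_I2 less_imp_le)
    then show False using le[OF A] by (simp add: nn_integral_cmult_indicator)
  qed
  with AE_space show ?thesis
  proof eventually_elim
    case (elim x)
    then show ?case by (cases "ennreal q < h x") (auto simp: A_def)
  qed
qed

lemma (in finite_measure) AE_ge_of_set_nn_integral_ge:
  assumes [measurable]: "h \<in> borel_measurable M"
    and ge: "\<And>A. A \<in> sets M \<Longrightarrow> ennreal p * emeasure M A \<le> (\<integral>\<^sup>+x. h x * indicator A x \<partial>M)"
  shows "AE x in M. ennreal p \<le> h x"
proof -
  define A where "A = {x \<in> space M. h x < ennreal p}"
  have A[measurable]: "A \<in> sets M" unfolding A_def by measurable
  have h_le: "(\<integral>\<^sup>+x. h x * indicator A x \<partial>M) \<le> (\<integral>\<^sup>+x. ennreal p * indicator A x \<partial>M)"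
    by (intro nn_integral_mono) (auto simp: A_def indicator_def less_imp_le)
  have "AE x in M. ennreal p * indicator A x \<le> h x * indicator A x"
  proof (rule ccontr)
    assume "\<not> ?thesis"
    moreover have "(\<integral>\<^sup>+x. h x * indicator A x \<partial>M) \<noteq> \<infinity>"
      using h_le by (auto simp: nn_integral_cmult_indicator ennreal_mult_eq_top_iff top_unique)
    ultimately have "(\<integral>\<^sup>+x. h x * indicator A x \<partial>M) < (\<integral>\<^sup>+x. ennreal p * indicator A x \<partial>M)"
      by (intro nn_integral_less) (auto simp: A_def indicator_def intro!: AE_I2 less_imp_le)
    then show False using ge[OF A] by (simp add: nn_integral_cmult_indicator)
  qed
  with AE_space show ?thesis
  proof eventually_elim
    case (elim x)
    then show ?case by (cases "h x < ennreal p") (auto simp: A_def)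
  qed
qed

lemma (in finite_measure) exists_bounded_density:
  assumes sets_N: "sets N = sets M" and pq: "0 \<le> p" "p \<le> q"
    and lower: "\<And>A. A \<in> sets M \<Longrightarrow> ennreal p * emeasure M A \<le> emeasure N A"
    and upper: "\<And>A. A \<in> sets M \<Longrightarrow> emeasure N A \<le> ennreal q * emeasure M A"
  shows "\<exists>k \<in> borel_measurable M. (\<forall>x. p \<le> k x \<and> k x \<le> q) \<and> N = density M (\<lambda>x. ennreal (k x))"
proof -
  have "absolutely_continuous M N"
    unfolding absolutely_continuous_def
  proof
    fix A assume "A \<in> null_sets M"
    then show "A \<in> null_sets N" using upper[of A] sets_N by (auto simp: null_sets_def)
  qed
  then obtain h where h[measurable]: "h \<in> borel_measurable M" and N: "density M h = N"
    using Radon_Nikodym sets_N by metis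
  have emeasure_N: "emeasure N A = (\<integral>\<^sup>+x. h x * indicator A x \<partial>M)" if "A \<in> sets M" for A
    using that N[symmetric] by (simp add: emeasure_density)
  define k where "k x = max p (min q (enn2real (h x)))" for x
  have k[measurable]: "k \<in> borel_measurable M" unfolding k_def by measurable
  have "AE x in M. h x \<le> ennreal q"
    by (rule AE_le_of_set_nn_integral_le) (use upper emeasure_N in auto)
  moreover have "AE x in M. ennreal p \<le> h x"
    by (rule AE_ge_of_set_nn_integral_ge) (use lower emeasure_N in auto)
  ultimately have "AE x in M. h x = ennreal (k x)"
  proof eventually_elim
    case (elim x)
    then obtain r where r: "h x = ennreal r" "0 \<le> r" by (cases "h x") (auto simp: top_unique)
    with elim pq have "p \<le> r" "r \<le> q" by (auto simp: ennreal_le_iff)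
    with r show ?case by (simp add: k_def)
  qed
  then have "N = density M (\<lambda>x. ennreal (k x))"
    using N by (auto intro!: density_cong)
  moreover have "p \<le> k x \<and> k x \<le> q" for x
    using pq by (auto simp: k_def)
  ultimately show ?thesis using k by blast
qed

section \<open>Monotone maps of the real line\<close>

lemma increment_le_of_local:
  fixes g h :: "real \<Rightarrow> real"
  assumes local: "\<And>a b. a \<le> b \<Longrightarrow> b \<le> a + 1 \<Longrightarrow> g b - g a \<le> h b - h a" and "a \<le> b"
  shows "g b - g a \<le> h b - h a"
proof -
  have "\<forall>a b. a \<le> b \<longrightarrow> b \<le> a + real n \<longrightarrow> g b - g a \<le> h b - h a" for n
  proof (induction n)
    case (Suc n)
    show ?case
    proof (intro allI impI)
      fix a b :: real assume ab: "a \<le> b" "b \<le> a + real (Suc n)"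
      show "g b - g a \<le> h b - h a"
      proof (cases "b \<le> a + 1")
        case False
        then have "g b - g (a + 1) \<le> h b - h (a + 1)" using Suc.IH ab by auto
        moreover have "g (a + 1) - g a \<le> h (a + 1) - h a" using local by simp
        ultimately show ?thesis by linarith
      qed (use local ab in auto)
    qed
  qed simp
  moreover have "b \<le> a + real (nat \<lceil>b - a\<rceil>)" by linarith
  ultimately show ?thesis using \<open>a \<le> b\<close> by blast
qed

lemma surj_of_bounded_displacement:
  fixes S :: "real \<Rightarrow> real"
  assumes cont: "continuous_on UNIV S" and bounded: "\<And>x. \<bar>S x - x\<bar> \<le> D"
  shows "surj S"
proof -
  have "\<exists>x. S x = y" for y
  proof -
    have "S (y - D) \<le> y" "y \<le> S (y + D)" "y - D \<le> y + D"
      using bounded[of "y - D"] bounded[of "y + D"] bounded[of y] by auto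
    then show ?thesis
      using IVT'[of S "y - D" y "y + D"] continuous_on_subset[OF cont] by blast
  qed
  then show ?thesis by (metis surjI)
qed

lemma vimage_Ioc_strict_mono:
  fixes S :: "'a::linorder \<Rightarrow> 'b::linorder"
  assumes "strict_mono S" and "surj S"
  shows "S -` {a<..b} = {inv S a<..inv S b}"
proof -
  have "y < S x \<longleftrightarrow> inv S y < x" "S x \<le> y \<longleftrightarrow> x \<le> inv S y" for x y
    using strict_mono_less[OF assms(1), of "inv S y" x] strict_mono_less_eq[OF assms(1), of x "inv S y"]
    by (simp_all add: surj_f_inv_f[OF assms(2)])
  then show ?thesis by auto
qed

section \<open>Exponential tails\<close>

lemma convex_on_secant_slope_mono:
  fixes V :: "real \<Rightarrow> real"
  assumes V: "convex_on UNIV V" and "a < b" "c < d" "a \<le> c" "b \<le> d"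
  shows "(V b - V a) / (b - a) \<le> (V d - V c) / (d - c)"
proof -
  have swap: "(V x - V y) / (x - y) = (V y - V x) / (y - x)" for x y
    by (metis minus_diff_eq minus_divide_divide)
  have "(V b - V a) / (b - a) \<le> (V d - V a) / (d - a)"
  proof (cases "b = d")
    case False
    with convex_on_slope_le(1)[OF V _ _ \<open>a < b\<close>, of d] assms show ?thesis
      by (simp add: swap[of a b] swap[of a d])
  qed simp
  also have "\<dots> \<le> (V d - V c) / (d - c)"
  proof (cases "a = c")
    case False
    with convex_on_slope_le(2)[OF V _ _ _ \<open>c < d\<close>, of a] assms show ?thesis
      by (simp add: swap[of a d] swap[of c d])
  qed simp
  finally show ?thesis .
qed

lemma convex_on_grows_right:
  fixes V :: "real \<Rightarrow> real"
  assumes V: "convex_on UNIV V" and "p < q" "q \<le> s" "0 \<le> e"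
  shows "V s + (V q - V p) / (q - p) * e \<le> V (s + e)"
proof (cases "e = 0")
  case False
  with assms have "(V q - V p) / (q - p) \<le> (V (s + e) - V s) / ((s + e) - s)"
    by (intro convex_on_secant_slope_mono[OF V]) auto
  with False \<open>0 \<le> e\<close> show ?thesis by (simp add: field_simps)
qed simp

lemma convex_on_grows_left:
  fixes V :: "real \<Rightarrow> real"
  assumes V: "convex_on UNIV V" and "p < q" "s \<le> p" "0 \<le> e"
  shows "V s + (V p - V q) / (q - p) * e \<le> V (s - e)"
proof (cases "e = 0")
  case False
  with assms have "(V s - V (s - e)) / (s - (s - e)) \<le> (V q - V p) / (q - p)"
    by (intro convex_on_secant_slope_mono[OF V]) auto
  with False \<open>0 \<le> e\<close> \<open>p < q\<close> show ?thesis by (simp add: field_simps)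
qed simp

lemma emeasure_density_translate_le:
  fixes w :: "real \<Rightarrow> real"
  assumes [measurable]: "w \<in> borel_measurable borel" "A \<in> sets borel"
    and k: "0 \<le> k" and shift: "\<And>s. s \<in> A \<Longrightarrow> w (s + d) \<le> k * w s"
  shows "emeasure (lborel_density w) ((\<lambda>s. s - d) -` A) \<le> ennreal k * emeasure (lborel_density w) A"
proof -
  have [measurable]: "(\<lambda>s. s - d) -` A \<in> sets borel"
    using measurable_sets[of "\<lambda>s. s - d" borel borel A] by simp
  have "emeasure (lborel_density w) ((\<lambda>s. s - d) -` A)
      = (\<integral>\<^sup>+s. ennreal (w s) * indicator ((\<lambda>s. s - d) -` A) s \<partial>lborel)"
    by (simp add: emeasure_density)
  also have "\<dots> = (\<integral>\<^sup>+s. ennreal (w (d + 1 * s)) * indicator A s \<partial>lborel)"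
    by (subst nn_integral_real_affine[where c=1 and t=d]) (auto simp: indicator_def)
  also have "\<dots> \<le> (\<integral>\<^sup>+s. ennreal k * (ennreal (w s) * indicator A s) \<partial>lborel)"
    using shift k by (intro nn_integral_mono)
      (auto simp: indicator_def ennreal_mult'[symmetric] add.commute intro: ennreal_leI)
  also have "\<dots> = ennreal k * emeasure (lborel_density w) A"
    by (simp add: nn_integral_cmult emeasure_density)
  finally show ?thesis .
qed

definition exponential_tails :: "(real \<Rightarrow> real) \<Rightarrow> real \<Rightarrow> real \<Rightarrow> real \<Rightarrow> bool" where
  "exponential_tails F h x\<^sub>1 x\<^sub>2 \<longleftrightarrow>
     (\<forall>x y. x \<le> y \<longrightarrow> y \<le> x\<^sub>1 \<longrightarrow> F x \<le> exp (- h * (y - x)) * F y) \<and>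
     (\<forall>x y. x\<^sub>2 \<le> x \<longrightarrow> x \<le> y \<longrightarrow> 1 - F y \<le> exp (- h * (y - x)) * (1 - F x))"

lemma le_ln_of_exp_bound:
  fixes u h d K :: real
  assumes "u \<le> exp (- h * d) * K * u" and "0 < u"
  shows "h * d \<le> ln K"
proof -
  have "1 \<le> exp (- h * d) * K"
    using assms mult_le_cancel_right1[of u "exp (- h * d) * K"] by simp
  then have "0 < K" using zero_less_mult_pos[of "exp (- h * d)" K] by simp
  then have "0 \<le> ln (exp (- h * d) * K)" using \<open>1 \<le> _\<close> by (simp add: ln_ge_zero)
  with \<open>0 < K\<close> show ?thesis by (simp add: ln_mult)
qed

lemma spread_bound_of_exponential_tails:
  fixes F :: "real \<Rightarrow> real"
  assumes tails: "exponential_tails F h x\<^sub>1 x\<^sub>2" and h: "0 < h" and K: "1 \<le> K"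
    and F_mono: "mono F" and F_pos: "\<And>x. 0 < F x" and F_lt1: "\<And>x. F x < 1"
    and "lo \<le> hi" and lower_tail: "F hi \<le> K * F lo" and upper_tail: "1 - F lo \<le> K * (1 - F hi)"
  shows "hi - lo \<le> \<bar>x\<^sub>2 - x\<^sub>1\<bar> + 2 * (ln K / h)"
proof -
  have \<beta>: "0 \<le> ln K / h" using K h by simp
  have left: "min hi x\<^sub>1 - lo \<le> ln K / h"
  proof (cases "lo < x\<^sub>1")
    case True
    define z where "z = min hi x\<^sub>1"
    have "F lo \<le> exp (- h * (z - lo)) * F z"
      using tails True \<open>lo \<le> hi\<close> by (auto simp: exponential_tails_def z_def)
    also have "\<dots> \<le> exp (- h * (z - lo)) * F hi"
      using F_mono by (intro mult_left_mono) (auto simp: z_def mono_def)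
    also have "\<dots> \<le> exp (- h * (z - lo)) * K * F lo"
      using lower_tail by (simp add: mult.assoc)
    finally have "h * (z - lo) \<le> ln K" by (rule le_ln_of_exp_bound[OF _ F_pos])
    with h show ?thesis by (simp add: z_def field_simps)
  qed (use \<beta> in auto)
  have right: "hi - max lo x\<^sub>2 \<le> ln K / h"
  proof (cases "x\<^sub>2 < hi")
    case True
    define z where "z = max lo x\<^sub>2"
    have "1 - F hi \<le> exp (- h * (hi - z)) * (1 - F z)"
      using tails True \<open>lo \<le> hi\<close> by (auto simp: exponential_tails_def z_def)
    also have "\<dots> \<le> exp (- h * (hi - z)) * (1 - F lo)"
      using F_mono by (intro mult_left_mono) (auto simp: z_def mono_def)
    also have "\<dots> \<le> exp (- h * (hi - z)) * K * (1 - F hi)"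
      using upper_tail by (simp add: mult.assoc)
    finally have "h * (hi - z) \<le> ln K"
      by (rule le_ln_of_exp_bound) (use F_lt1[of hi] in simp)
    with h show ?thesis by (simp add: z_def field_simps)
  qed (use \<beta> in auto)
  show ?thesis
    using left right \<beta> by (auto simp: min_def max_def split: if_splits)
qed

section \<open>Log-concave reference densities\<close>

locale log_concave_prob =
  fixes V :: "real \<Rightarrow> real"
  assumes convex: "convex_on UNIV V"
    and prob: "prob_space (lborel_density (\<lambda>x. exp (- V x)))"
begin

abbreviation m :: "real \<Rightarrow> real" where "m \<equiv> \<lambda>x. exp (- V x)"
abbreviation \<nu> :: "real measure" where "\<nu> \<equiv> lborel_density m"
abbreviation F :: "real \<Rightarrow> real" where "F \<equiv> cdf_of m"

lemma m_borel[measurable]: "m \<in> borel_measurable borel"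
  using convex_on_continuous[OF open_UNIV convex]
  by (intro borel_measurable_continuous_onI continuous_intros)

sublocale real_distribution \<nu>
  using prob by (simp add: real_distribution_def real_distribution_axioms_def)

lemma one_minus_cdf_eq_measure: "1 - F x = measure \<nu> {x<..}"
proof -
  have "{x<..} = space \<nu> - {..x}" by auto
  then show ?thesis using prob_compl[of "{..x}"] by (simp add: cdf_of_def)
qed

lemmas mono_cdf = mono_cdf_of[OF finite_measure_axioms]

lemma comparable_measure_in_Pab:
  assumes prob: "prob_space \<mu>" and sets_\<mu>: "sets \<mu> = sets borel" and "1 \<le> \<kappa>"
    and upper: "\<And>A. A \<in> sets borel \<Longrightarrow> emeasure \<mu> A \<le> ennreal \<kappa> * emeasure \<nu> A"
    and lower: "\<And>A. A \<in> sets borel \<Longrightarrow> emeasure \<nu> A \<le> ennreal \<kappa> * emeasure \<mu> A"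
  shows "\<exists>g \<in> Pab (1 / \<kappa>) \<kappa> m. \<mu> = lborel_density g"
proof -
  have "ennreal (1 / \<kappa>) * emeasure \<nu> A \<le> emeasure \<mu> A" if "A \<in> sets borel" for A
  proof -
    have "ennreal (1 / \<kappa>) * emeasure \<nu> A \<le> ennreal (1 / \<kappa>) * (ennreal \<kappa> * emeasure \<mu> A)"
      using lower[OF that] by (intro mult_left_mono) auto
    also have "\<dots> = emeasure \<mu> A"
      using \<open>1 \<le> \<kappa>\<close> by (simp add: mult.assoc[symmetric] ennreal_mult'[symmetric])
    finally show ?thesis .
  qed
  moreover have "1 / \<kappa> \<le> \<kappa>"
    using \<open>1 \<le> \<kappa>\<close> by (simp add: divide_le_eq order_trans[OF _ mult_mono, of 1 1 1])
  ultimately have "\<exists>k \<in> borel_measurable \<nu>. (\<forall>x. 1 / \<kappa> \<le> k x \<and> k x \<le> \<kappa>) \<and> \<mu> = density \<nu> (\<lambda>x. ennreal (k x))"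
    using upper sets_\<mu> \<open>1 \<le> \<kappa>\<close> by (intro exists_bounded_density) auto
  then obtain k where k: "k \<in> borel_measurable \<nu>" and k_between: "\<And>x. 1 / \<kappa> \<le> k x \<and> k x \<le> \<kappa>"
    and \<mu>_density: "\<mu> = density \<nu> (\<lambda>x. ennreal (k x))"
    by blast
  define g where "g x = m x * k x" for x
  have [measurable]: "k \<in> borel_measurable borel"
    using k measurable_cong_sets[of \<nu> borel] by simp
  have "\<mu> = lborel_density g"
    using \<mu>_density k_between \<open>1 \<le> \<kappa>\<close> by (simp add: density_density_eq g_def ennreal_mult')
  moreover have "g \<in> Pab (1 / \<kappa>) \<kappa> m"
    unfolding Pab_def
  proof (intro CollectI conjI allI)
    show "g \<in> borel_measurable borel" unfolding g_def by measurable
    show "prob_space (lborel_density g)"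
      using \<open>\<mu> = lborel_density g\<close> prob by simp
    fix x
    have "0 \<le> m x" by simp
    then show "1 / \<kappa> * m x \<le> g x" "g x \<le> \<kappa> * m x"
      using mult_right_mono[of "1 / \<kappa>" "k x" "m x"] mult_right_mono[of "k x" \<kappa> "m x"] k_between[of x]
      by (simp_all add: g_def mult.commute)
  qed
  ultimately show ?thesis by blast
qed

lemma not_antimono_potential: "\<exists>p q. p < q \<and> V p < V q"
proof (rule ccontr)
  assume "\<not> ?thesis"
  then have "V q \<le> V p" if "p < q" for p q using that by (meson not_le)
  then have "m 0 \<le> m x" if "0 < x" for x using that by simp
  then have "m 0 * (2 / m 0 - 0) \<le> measure \<nu> {0<..2 / m 0}"
    by (intro measure_density_Ioc_lower) (auto simp: finite_measure_axioms)
  then show False using prob_le_1[of "{0<..2 / m 0}"] by simp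
qed

lemma not_mono_potential: "\<exists>p q. p < q \<and> V q < V p"
proof (rule ccontr)
  assume "\<not> ?thesis"
  then have "V p \<le> V q" if "p < q" for p q using that by (meson not_le)
  then have "m 0 \<le> m x" if "x < 0" for x using that by simp
  then have "m 0 * (0 - - (2 / m 0)) \<le> measure \<nu> {- (2 / m 0)<..0}"
    by (intro measure_density_Ioc_lower) (auto simp: finite_measure_axioms less_le)
  then show False using prob_le_1[of "{- (2 / m 0)<..0}"] by simp
qed

lemma upper_tail_decay:
  assumes "p < q" and h: "h \<le> (V q - V p) / (q - p)" and "q \<le> x" "x \<le> y"
  shows "1 - F y \<le> exp (- h * (y - x)) * (1 - F x)"
proof -
  have "m (s + (y - x)) \<le> exp (- h * (y - x)) * m s" if "s \<in> {x<..}" for s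
  proof -
    have "V s + h * (y - x) \<le> V s + (V q - V p) / (q - p) * (y - x)"
      using h \<open>x \<le> y\<close> by (intro add_left_mono mult_right_mono) auto
    also have "\<dots> \<le> V (s + (y - x))"
      using convex_on_grows_right[OF convex \<open>p < q\<close>] that \<open>q \<le> x\<close> \<open>x \<le> y\<close> by simp
    finally show ?thesis by (simp add: exp_add[symmetric])
  qed
  then have "emeasure \<nu> ((\<lambda>s. s - (y - x)) -` {x<..}) \<le> ennreal (exp (- h * (y - x))) * emeasure \<nu> {x<..}"
    by (intro emeasure_density_translate_le) auto
  moreover have "(\<lambda>s. s - (y - x)) -` {x<..} = {y<..}" by auto
  ultimately have "ennreal (measure \<nu> {y<..}) \<le> ennreal (exp (- h * (y - x)) * measure \<nu> {x<..})"
    by (simp add: emeasure_eq_measure ennreal_mult')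
  then show ?thesis
    by (simp add: one_minus_cdf_eq_measure ennreal_le_iff)
qed

lemma lower_tail_decay:
  assumes "p < q" and h: "h \<le> (V p - V q) / (q - p)" and "x \<le> y" "y \<le> p"
  shows "F x \<le> exp (- h * (y - x)) * F y"
proof -
  have "m (s + (x - y)) \<le> exp (- h * (y - x)) * m s" if "s \<in> {..y}" for s
  proof -
    have "V s + h * (y - x) \<le> V s + (V p - V q) / (q - p) * (y - x)"
      using h \<open>x \<le> y\<close> by (intro add_left_mono mult_right_mono) auto
    also have "\<dots> \<le> V (s - (y - x))"
      using convex_on_grows_left[OF convex \<open>p < q\<close>] that \<open>y \<le> p\<close> \<open>x \<le> y\<close> by simp
    also have "s - (y - x) = s + (x - y)" by simp
    finally show ?thesis by (simp add: exp_add[symmetric])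
  qed
  then have "emeasure \<nu> ((\<lambda>s. s - (x - y)) -` {..y}) \<le> ennreal (exp (- h * (y - x))) * emeasure \<nu> {..y}"
    by (intro emeasure_density_translate_le) auto
  moreover have "(\<lambda>s. s - (x - y)) -` {..y} = {..x}" by auto
  ultimately have "ennreal (measure \<nu> {..x}) \<le> ennreal (exp (- h * (y - x)) * measure \<nu> {..y})"
    by (simp add: emeasure_eq_measure ennreal_mult')
  then show ?thesis
    by (simp add: cdf_of_def ennreal_le_iff)
qed

lemma exponential_tails_cdf: "\<exists>h x\<^sub>1 x\<^sub>2. 0 < h \<and> exponential_tails F h x\<^sub>1 x\<^sub>2"
proof -
  obtain p q where pq: "p < q" "V p < V q" using not_antimono_potential by blast
  obtain p' q' where pq': "p' < q'" "V q' < V p'" using not_mono_potential by blast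
  define h where "h = min ((V q - V p) / (q - p)) ((V p' - V q') / (q' - p'))"
  have "0 < h" using pq pq' by (simp add: h_def)
  moreover have "exponential_tails F h p' q"
    unfolding exponential_tails_def
    using upper_tail_decay[OF pq(1)] lower_tail_decay[OF pq'(1)] by (simp add: h_def)
  ultimately show ?thesis by blast
qed

end

locale lipschitz_log_concave_prob = log_concave_prob +
  fixes L :: real
  assumes lipschitz: "L-lipschitz_on UNIV V"
begin

lemma L_nonneg: "0 \<le> L"
  using lipschitz by (simp add: lipschitz_on_def)

lemma density_le_exp_dist: "m x \<le> exp (L * \<bar>x - z\<bar>) * m z"
proof -
  have "V z - V x \<le> L * \<bar>x - z\<bar>"
    using lipschitz by (auto simp: lipschitz_on_def dist_real_def abs_le_iff abs_minus_commute)
  then show ?thesis by (simp add: exp_add[symmetric])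
qed

lemma cdf_increment_bounds:
  assumes "a \<le> b" and near: "\<And>x. a < x \<Longrightarrow> x \<le> b \<Longrightarrow> \<bar>x - z\<bar> \<le> R"
  shows "m z * (b - a) \<le> exp (L * R) * (F b - F a)"
    and "F b - F a \<le> exp (L * R) * m z * (b - a)"
proof -
  have F_diff: "F b - F a = measure \<nu> {a<..b}"
    by (rule cdf_of_diff[OF finite_measure_axioms \<open>a \<le> b\<close>])
  have exp_le: "exp (L * \<bar>x - z\<bar>) \<le> exp (L * R)" if "a < x" "x \<le> b" for x
    using near[OF that] L_nonneg by (simp add: mult_left_mono)
  have "m z / exp (L * R) * (b - a) \<le> measure \<nu> {a<..b}"
  proof (rule measure_density_Ioc_lower[OF m_borel finite_measure_axioms \<open>a \<le> b\<close>])
    fix x assume "a < x" "x \<le> b"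
    have "m z \<le> exp (L * \<bar>x - z\<bar>) * m x"
      using density_le_exp_dist[of z x] by (simp add: abs_minus_commute)
    also have "\<dots> \<le> exp (L * R) * m x"
      using exp_le \<open>a < x\<close> \<open>x \<le> b\<close> by (intro mult_right_mono) auto
    finally show "m z / exp (L * R) \<le> m x" by (simp add: field_simps)
  qed simp
  then show "m z * (b - a) \<le> exp (L * R) * (F b - F a)"
    by (simp add: F_diff field_simps)
  have "measure \<nu> {a<..b} \<le> exp (L * R) * m z * (b - a)"
  proof (rule measure_density_Ioc_upper[OF m_borel finite_measure_axioms \<open>a \<le> b\<close>])
    fix x assume "a < x" "x \<le> b"
    have "m x \<le> exp (L * \<bar>x - z\<bar>) * m z" by (rule density_le_exp_dist)
    also have "\<dots> \<le> exp (L * R) * m z"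
      using exp_le \<open>a < x\<close> \<open>x \<le> b\<close> by (intro mult_right_mono) auto
    finally show "m x \<le> exp (L * R) * m z" .
  qed simp
  then show "F b - F a \<le> exp (L * R) * m z * (b - a)"
    by (simp add: F_diff)
qed

lemma cdf_strict_mono: "strict_mono F"
proof (rule strict_monoI)
  fix a b :: real assume "a < b"
  then have "m a * (b - a) \<le> exp (L * (b - a)) * (F b - F a)"
    by (intro cdf_increment_bounds(1)) auto
  moreover have "0 < m a * (b - a)" using \<open>a < b\<close> by simp
  ultimately have "0 < exp (L * (b - a)) * (F b - F a)" by linarith
  then show "F a < F b" by (simp add: zero_less_mult_iff)
qed

lemma cdf_pos: "0 < F x"
  using strict_monoD[OF cdf_strict_mono, of "x - 1" x] cdf_of_def[of m "x - 1"] measure_nonneg[of \<nu> "{..x - 1}"]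
  by linarith

lemma cdf_less_1: "F x < 1"
  using strict_monoD[OF cdf_strict_mono, of x "x + 1"] prob_le_1[of "{..x + 1}"] cdf_of_def[of m "x + 1"]
  by linarith

end

section \<open>Displacement interpolation\<close>

locale transport_to_comparable_density = lipschitz_log_concave_prob +
  fixes c C :: real and f :: "real \<Rightarrow> real"
  assumes c_pos: "0 < c" and f_in_Pab: "f \<in> Pab c C m"
begin

abbreviation \<nu>\<^sub>f :: "real measure" where "\<nu>\<^sub>f \<equiv> lborel_density f"
abbreviation T :: "real \<Rightarrow> real" where "T \<equiv> ot_map m f"

lemma f_borel[measurable]: "f \<in> borel_measurable borel"
  using f_in_Pab by (simp add: Pab_def)

lemma f_between: "c * m x \<le> f x" "f x \<le> C * m x"
  using f_in_Pab by (auto simp: Pab_def)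

sublocale NF: real_distribution \<nu>\<^sub>f
  using f_in_Pab by (simp add: Pab_def real_distribution_def real_distribution_axioms_def)

lemma C_pos: "0 < C"
proof -
  have "c * m 0 \<le> C * m 0" using f_between[of 0] by linarith
  then show ?thesis using c_pos by simp
qed

lemma measure_f_between:
  assumes "A \<in> sets borel"
  shows "c * measure \<nu> A \<le> measure \<nu>\<^sub>f A" and "measure \<nu>\<^sub>f A \<le> C * measure \<nu> A"
proof -
  have "m x \<le> (1 / c) * f x" for x using f_between(1)[of x] c_pos by (simp add: field_simps)
  then have "measure \<nu> A \<le> (1 / c) * measure \<nu>\<^sub>f A"
    using c_pos assms by (intro measure_density_le_scaled) (auto simp: NF.finite_measure_axioms)
  then show "c * measure \<nu> A \<le> measure \<nu>\<^sub>f A" using c_pos by (simp add: field_simps)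
  show "measure \<nu>\<^sub>f A \<le> C * measure \<nu> A"
    using C_pos assms f_between(2) by (intro measure_density_le_scaled) (auto simp: finite_measure_axioms)
qed

lemma c_le_1_le_C: "c \<le> 1" "1 \<le> C"
  using measure_f_between[of UNIV] prob_space NF.prob_space by auto

lemma cdf_f_between:
  "c * F x \<le> cdf_of f x" "cdf_of f x \<le> C * F x"
  "c * (1 - F x) \<le> 1 - cdf_of f x" "1 - cdf_of f x \<le> C * (1 - F x)"
proof -
  have "1 - cdf_of f x = measure \<nu>\<^sub>f {x<..}"
    using NF.prob_compl[of "{..x}"] by (simp add: cdf_of_def Compl_eq_Diff_UNIV[symmetric] Compl_atMost)
  then show "c * (1 - F x) \<le> 1 - cdf_of f x" "1 - cdf_of f x \<le> C * (1 - F x)"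
    using measure_f_between[of "{x<..}"] by (simp_all add: one_minus_cdf_eq_measure)
  show "c * F x \<le> cdf_of f x" "cdf_of f x \<le> C * F x"
    using measure_f_between[of "{..x}"] by (simp_all add: cdf_of_def)
qed

lemma cdf_f_increment_between:
  assumes "a \<le> b"
  shows "c * (F b - F a) \<le> cdf_of f b - cdf_of f a" and "cdf_of f b - cdf_of f a \<le> C * (F b - F a)"
  using measure_f_between[of "{a<..b}"] assms
  by (simp_all add: cdf_of_diff finite_measure_axioms NF.finite_measure_axioms)

lemma cdf_f_ot_map: "cdf_of f (T x) = F x"
proof -
  have "isCont (cdf \<nu>\<^sub>f) y" for y
    using isCont_cdf_of[OF f_borel NF.prob_space_axioms, of y] by (simp add: cdf_of_eq_cdf)
  then show ?thesis
    unfolding ot_map_def quantile_of_def cdf_of_eq_cdf[of f]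
    by (intro cdf_quantile_eq NF.real_distribution_axioms cdf_pos cdf_less_1)
qed

lemma ot_map_strict_mono: "strict_mono T"
proof (rule strict_monoI)
  fix a b :: real assume "a < b"
  then have "cdf_of f (T a) < cdf_of f (T b)"
    using cdf_strict_mono by (simp add: cdf_f_ot_map strict_mono_less)
  then show "T a < T b"
    using mono_cdf_of[OF NF.finite_measure_axioms] by (meson monoD not_less)
qed

lemma ot_map_displacement:
  assumes tails: "exponential_tails F h x\<^sub>1 x\<^sub>2" and "0 < h"
  shows "\<bar>T x - x\<bar> \<le> \<bar>x\<^sub>2 - x\<^sub>1\<bar> + 2 * (ln (max C (1 / c)) / h)"
proof -
  define K where "K = max C (1 / c)"
  have K: "1 \<le> K" "C \<le> K" "1 / c \<le> K" using c_le_1_le_C by (auto simp: K_def)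
  note spread = spread_bound_of_exponential_tails[OF tails \<open>0 < h\<close> K(1) mono_cdf cdf_pos cdf_less_1]
  have F_nonneg: "0 \<le> F y" and F_le_1: "F y \<le> 1" for y
    using cdf_pos[of y] cdf_less_1[of y] by auto
  note between = cdf_f_between[of "T x", unfolded cdf_f_ot_map]
  show ?thesis
  proof (cases "x \<le> T x")
    case True
    have "F (T x) \<le> (1 / c) * F x" using between(1) c_pos by (simp add: field_simps)
    also have "\<dots> \<le> K * F x" using K F_nonneg by (intro mult_right_mono) auto
    finally have "F (T x) \<le> K * F x" .
    moreover have "1 - F x \<le> K * (1 - F (T x))"
      using between(4) K(2) F_le_1[of "T x"] by (meson diff_ge_0_iff_ge mult_right_mono order_trans)
    ultimately show ?thesis using spread[OF True] True by (simp add: K_def)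
  next
    case False
    have "F x \<le> K * F (T x)"
      using between(2) K(2) F_nonneg[of "T x"] by (meson mult_right_mono order_trans)
    moreover have "1 - F (T x) \<le> K * (1 - F x)"
    proof -
      have "1 - F (T x) \<le> (1 / c) * (1 - F x)" using between(3) c_pos by (simp add: field_simps)
      also have "\<dots> \<le> K * (1 - F x)" using K F_le_1 by (intro mult_right_mono) auto
      finally show ?thesis .
    qed
    ultimately show ?thesis using spread[of "T x" x] False by (simp add: K_def)
  qed
qed

abbreviation interp :: "real \<Rightarrow> real \<Rightarrow> real" where
  "interp t x \<equiv> (1 - t) * x + t * T x"

lemma mono_interp:
  assumes "t \<in> {0..1}"
  shows "mono (interp t)"
proof (rule monoI)
  fix x y :: real assume "x \<le> y"
  then have "T x \<le> T y"
    using ot_map_strict_mono by (simp add: strict_mono_less_eq)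
  then have "t * T x \<le> t * T y"
    using assms by (simp add: mult_left_mono)
  moreover have "(1 - t) * x \<le> (1 - t) * y"
    using assms \<open>x \<le> y\<close> by (simp add: mult_left_mono)
  ultimately show "interp t x \<le> interp t y" by linarith
qed

context
  fixes D :: real
  assumes displacement: "\<And>x. \<bar>T x - x\<bar> \<le> D"
begin

lemma displacement_nonneg: "0 \<le> D"
  using displacement[of 0] by linarith

lemma interp_displacement:
  assumes "t \<in> {0..1}"
  shows "\<bar>interp t x - x\<bar> \<le> D"
proof -
  have "interp t x - x = t * (T x - x)"
    by (simp add: algebra_simps)
  then have "\<bar>interp t x - x\<bar> = t * \<bar>T x - x\<bar>"
    using assms by (simp add: abs_mult)
  also have "\<dots> \<le> D"
    using assms displacement[of x] mult_left_le_one_le[of "\<bar>T x - x\<bar>" t] by auto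
  finally show ?thesis .
qed

(* For b \<le> a + 1 the intervals (a, b], (T a, T b] and (interp t a, interp t b] lie within distance
   D + 1 of a, where m stays within the factor exp (L (D + 1)) of m a. *)
lemma ot_map_increment_bounds:
  assumes "a \<le> b" "b \<le> a + 1"
  shows "m a * (T b - T a) \<le> max C (1 / c) * exp (L * (D + 1)) * (F b - F a)"
    and "F b - F a \<le> max C (1 / c) * exp (L * (D + 1)) * m a * (T b - T a)"
proof -
  define B where "B = max C (1 / c)"
  define E where "E = exp (L * (D + 1))"
  have B: "C \<le> B" "1 / c \<le> B" "0 \<le> B" using C_pos by (auto simp: B_def)
  have T_ab: "T a \<le> T b"
    using ot_map_strict_mono assms by (simp add: strict_mono_less_eq)
  have "\<bar>x - a\<bar> \<le> D + 1" if "T a < x" "x \<le> T b" for x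
    using that displacement[of a] displacement[of b] assms by (auto simp: abs_le_iff)
  note near = cdf_increment_bounds[OF T_ab this, folded E_def]
  have X_nonneg: "0 \<le> F b - F a" and Y_nonneg: "0 \<le> F (T b) - F (T a)"
    using monoD[OF mono_cdf] assms T_ab by auto
  note between = cdf_f_increment_between[OF T_ab, unfolded cdf_f_ot_map]
  have "F (T b) - F (T a) \<le> (1 / c) * (F b - F a)"
    using between(1) c_pos by (simp add: field_simps)
  also have "\<dots> \<le> B * (F b - F a)"
    using B X_nonneg by (intro mult_right_mono) auto
  finally have Y_le: "F (T b) - F (T a) \<le> B * (F b - F a)" .
  have "m a * (T b - T a) \<le> E * (F (T b) - F (T a))" by (rule near(1))
  also have "\<dots> \<le> E * (B * (F b - F a))"
    using Y_le by (intro mult_left_mono) (auto simp: E_def)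
  finally show "m a * (T b - T a) \<le> max C (1 / c) * exp (L * (D + 1)) * (F b - F a)"
    by (simp add: B_def E_def ac_simps)
  have "F b - F a \<le> B * (F (T b) - F (T a))"
    using between(2) B Y_nonneg by (meson mult_right_mono order_trans)
  also have "\<dots> \<le> B * (E * m a * (T b - T a))"
    using near(2) B by (intro mult_left_mono) auto
  finally show "F b - F a \<le> max C (1 / c) * exp (L * (D + 1)) * m a * (T b - T a)"
    by (simp add: B_def E_def ac_simps)
qed

lemma interp_increment_bounds:
  assumes t: "t \<in> {0..1}" and ab: "a \<le> b" "b \<le> a + 1"
  shows "m a * (interp t b - interp t a) \<le> max C (1 / c) * exp (L * (D + 1)) * (F b - F a)"
    and "F b - F a \<le> max C (1 / c) * exp (L * (D + 1)) * m a * (interp t b - interp t a)"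
proof -
  define E where "E = exp (L * (D + 1))"
  define K where "K = max C (1 / c) * E"
  have "0 \<le> D" by (rule displacement_nonneg)
  have E_le_K: "E \<le> K"
    using c_le_1_le_C mult_right_mono[of 1 "max C (1 / c)" E] by (simp add: K_def E_def)
  have X: "0 \<le> F b - F a" "0 \<le> m a * (b - a)"
    using monoD[OF mono_cdf ab(1)] ab by auto
  have "\<bar>x - a\<bar> \<le> D + 1" if "a < x" "x \<le> b" for x
    using that ab \<open>0 \<le> D\<close> by auto
  note id_bounds = cdf_increment_bounds[OF ab(1) this, folded E_def]
  note T_bounds = ot_map_increment_bounds[OF ab, folded E_def, folded K_def]
  have "m a * (b - a) \<le> E * (F b - F a)" by (rule id_bounds(1))
  also have "\<dots> \<le> K * (F b - F a)" using E_le_K X(1) by (rule mult_right_mono)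
  finally have id_K1: "m a * (b - a) \<le> K * (F b - F a)" .
  have "F b - F a \<le> E * (m a * (b - a))" using id_bounds(2) by (simp add: mult.assoc)
  also have "\<dots> \<le> K * (m a * (b - a))" using E_le_K X(2) by (rule mult_right_mono)
  finally have id_K2: "F b - F a \<le> K * m a * (b - a)" by (simp add: mult.assoc)
  have "m a * (interp t b - interp t a) = (1 - t) * (m a * (b - a)) + t * (m a * (T b - T a))"
    by (simp add: algebra_simps)
  also have "\<dots> \<le> K * (F b - F a)"
    using id_K1 T_bounds(1) t by (intro convex_bound_le) auto
  finally show "m a * (interp t b - interp t a) \<le> max C (1 / c) * exp (L * (D + 1)) * (F b - F a)"
    by (simp add: K_def E_def)
  have "F b - F a = (1 - t) * (F b - F a) + t * (F b - F a)"
    by (simp add: algebra_simps)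
  also have "\<dots> \<le> (1 - t) * (K * m a * (b - a)) + t * (K * m a * (T b - T a))"
    using id_K2 T_bounds(2) t by (intro add_mono mult_left_mono) auto
  also have "\<dots> = K * m a * (interp t b - interp t a)"
    by (simp add: algebra_simps)
  finally show "F b - F a \<le> max C (1 / c) * exp (L * (D + 1)) * m a * (interp t b - interp t a)"
    by (simp add: K_def E_def)
qed

lemma cdf_interp_local:
  assumes t: "t \<in> {0..1}" and ab: "a \<le> b" "b \<le> a + 1"
  defines "\<kappa> \<equiv> max C (1 / c) * exp (2 * L * (D + 1))"
  shows "F (interp t b) - F (interp t a) \<le> \<kappa> * (F b - F a)"
    and "F b - F a \<le> \<kappa> * (F (interp t b) - F (interp t a))"
    and "interp t b - interp t a \<le> \<kappa> * (b - a)"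
proof -
  define E where "E = exp (L * (D + 1))"
  define K where "K = max C (1 / c) * E"
  have "0 \<le> D" by (rule displacement_nonneg)
  have "exp (2 * L * (D + 1)) = E * E"
    using exp_double[of "L * (D + 1)"] by (simp add: E_def power2_eq_square mult.assoc)
  then have \<kappa>: "\<kappa> = K * E"
    by (simp add: \<kappa>_def K_def mult.assoc)
  have K: "0 \<le> K" "0 \<le> E" using C_pos by (auto simp: K_def E_def)
  have S_ab: "interp t a \<le> interp t b"
    using monoD[OF mono_interp[OF t] ab(1)] .
  have "\<bar>x - a\<bar> \<le> D + 1" if "interp t a < x" "x \<le> interp t b" for x
    using that interp_displacement[OF t, of a] interp_displacement[OF t, of b] ab
    by (auto simp: abs_le_iff)
  note S_cdf = cdf_increment_bounds[OF S_ab this, folded E_def]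
  note S_incr = interp_increment_bounds[OF t ab, folded E_def, folded K_def]
  have "F (interp t b) - F (interp t a) \<le> E * (m a * (interp t b - interp t a))"
    using S_cdf(2) by (simp add: ac_simps)
  also have "\<dots> \<le> E * (K * (F b - F a))"
    using S_incr(1) K by (intro mult_left_mono) auto
  finally show "F (interp t b) - F (interp t a) \<le> \<kappa> * (F b - F a)"
    by (simp add: \<kappa> ac_simps)
  have "F b - F a \<le> K * (m a * (interp t b - interp t a))"
    using S_incr(2) by (simp add: ac_simps)
  also have "\<dots> \<le> K * (E * (F (interp t b) - F (interp t a)))"
    using S_cdf(1) K by (intro mult_left_mono) auto
  finally show "F b - F a \<le> \<kappa> * (F (interp t b) - F (interp t a))"
    by (simp add: \<kappa> ac_simps)
  have "\<bar>x - a\<bar> \<le> D + 1" if "a < x" "x \<le> b" for x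
    using that ab \<open>0 \<le> D\<close> by auto
  note id_cdf = cdf_increment_bounds[OF ab(1) this, folded E_def]
  have "m a * (interp t b - interp t a) \<le> K * (F b - F a)" by (rule S_incr(1))
  also have "\<dots> \<le> K * (E * m a * (b - a))" using id_cdf(2) K by (intro mult_left_mono)
  also have "\<dots> = m a * (\<kappa> * (b - a))"
    by (simp add: \<kappa> ac_simps)
  finally show "interp t b - interp t a \<le> \<kappa> * (b - a)"
    by (simp add: mult_le_cancel_left_pos)
qed

lemma cdf_interp_comparison:
  assumes t: "t \<in> {0..1}" and "a \<le> b"
  defines "\<kappa> \<equiv> max C (1 / c) * exp (2 * L * (D + 1))"
  shows "F (interp t b) - F (interp t a) \<le> \<kappa> * (F b - F a)"
    and "F b - F a \<le> \<kappa> * (F (interp t b) - F (interp t a))"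
proof -
  note local = cdf_interp_local[OF t, folded \<kappa>_def]
  have "F (interp t b) - F (interp t a) \<le> \<kappa> * F b - \<kappa> * F a"
  proof (rule increment_le_of_local[where g = "\<lambda>x. F (interp t x)" and h = "\<lambda>x. \<kappa> * F x", OF _ \<open>a \<le> b\<close>])
    fix x y :: real assume "x \<le> y" "y \<le> x + 1"
    from local(1)[OF this] show "F (interp t y) - F (interp t x) \<le> \<kappa> * F y - \<kappa> * F x"
      by (simp add: right_diff_distrib)
  qed
  then show "F (interp t b) - F (interp t a) \<le> \<kappa> * (F b - F a)"
    by (simp add: right_diff_distrib)
  have "F b - F a \<le> \<kappa> * F (interp t b) - \<kappa> * F (interp t a)"
  proof (rule increment_le_of_local[where g = F and h = "\<lambda>x. \<kappa> * F (interp t x)", OF _ \<open>a \<le> b\<close>])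
    fix x y :: real assume "x \<le> y" "y \<le> x + 1"
    from local(2)[OF this] show "F y - F x \<le> \<kappa> * F (interp t y) - \<kappa> * F (interp t x)"
      by (simp add: right_diff_distrib)
  qed
  then show "F b - F a \<le> \<kappa> * (F (interp t b) - F (interp t a))"
    by (simp add: right_diff_distrib)
qed

lemma interp_lipschitz:
  assumes t: "t \<in> {0..1}"
  shows "(max C (1 / c) * exp (2 * L * (D + 1)))-lipschitz_on UNIV (interp t)"
proof (rule lipschitz_onI)
  let ?\<kappa> = "max C (1 / c) * exp (2 * L * (D + 1))"
  have increment: "interp t y - interp t x \<le> ?\<kappa> * (y - x)" if "x \<le> y" for x y
  proof -
    have "interp t y - interp t x \<le> ?\<kappa> * y - ?\<kappa> * x"
    proof (rule increment_le_of_local[where g = "interp t" and h = "\<lambda>x. ?\<kappa> * x", OF _ that])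
      fix a b :: real assume "a \<le> b" "b \<le> a + 1"
      from cdf_interp_local(3)[OF t this] show "interp t b - interp t a \<le> ?\<kappa> * b - ?\<kappa> * a"
        by (simp add: right_diff_distrib)
    qed
    then show ?thesis by (simp add: right_diff_distrib)
  qed
  fix x y :: real
  show "dist (interp t x) (interp t y) \<le> ?\<kappa> * dist x y"
  proof (cases "x \<le> y")
    case True
    then show ?thesis
      using increment[OF True] monoD[OF mono_interp[OF t] True] by (simp add: dist_real_def)
  next
    case False
    then show ?thesis
      using increment[of y x] monoD[OF mono_interp[OF t], of y x] by (simp add: dist_real_def)
  qed
next
  show "0 \<le> max C (1 / c) * exp (2 * L * (D + 1))"
    using C_pos by simp
qed

lemma interp_strict_mono:
  assumes t: "t \<in> {0..1}"
  shows "strict_mono (interp t)"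
proof (rule strict_monoI)
  fix a b :: real assume "a < b"
  then have "0 < F b - F a"
    using cdf_strict_mono by (simp add: strict_mono_less)
  also have "\<dots> \<le> max C (1 / c) * exp (2 * L * (D + 1)) * (F (interp t b) - F (interp t a))"
    using cdf_interp_comparison(2)[OF t] \<open>a < b\<close> by simp
  finally have "0 < max C (1 / c) * exp (2 * L * (D + 1)) * (F (interp t b) - F (interp t a))" .
  moreover have "0 < max C (1 / c) * exp (2 * L * (D + 1))"
    using C_pos by (simp add: less_max_iff_disj)
  ultimately have "F (interp t a) < F (interp t b)"
    using zero_less_mult_pos by fastforce
  then show "interp t a < interp t b"
    using monoD[OF mono_cdf] by (meson not_less)
qed

lemma surj_interp:
  assumes t: "t \<in> {0..1}"
  shows "surj (interp t)"
  using lipschitz_on_continuous_on[OF interp_lipschitz[OF t]] interp_displacement[OF t]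
  by (rule surj_of_bounded_displacement)

lemma measurable_interp:
  assumes t: "t \<in> {0..1}"
  shows "interp t \<in> measurable \<nu> lborel"
proof -
  have "interp t \<in> borel_measurable borel"
    using lipschitz_on_continuous_on[OF interp_lipschitz[OF t]]
    by (rule borel_measurable_continuous_onI)
  then show ?thesis
    using measurable_cong_sets[of \<nu> borel lborel borel] by simp
qed

lemma measure_geodesic_pt_Ioc:
  assumes t: "t \<in> {0..1}" and "a \<le> b"
  shows "measure (geodesic_pt m f t) {a<..b} = F (inv (interp t) b) - F (inv (interp t) a)"
proof -
  note strict_mono = interp_strict_mono[OF t] and surj = surj_interp[OF t]
  have "inv (interp t) a \<le> inv (interp t) b"
    using \<open>a \<le> b\<close> strict_mono_less_eq[OF strict_mono, of "inv (interp t) a" "inv (interp t) b"]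
    by (simp add: surj_f_inv_f[OF surj])
  moreover have "interp t -` {a<..b} = {inv (interp t) a<..inv (interp t) b}"
    by (rule vimage_Ioc_strict_mono[OF strict_mono surj])
  ultimately show ?thesis
    using measurable_interp[OF t]
    by (simp add: geodesic_pt_def measure_distr cdf_of_diff finite_measure_axioms)
qed

lemma geodesic_pt_comparable:
  assumes t: "t \<in> {0..1}" and A: "A \<in> sets borel"
  defines "\<kappa> \<equiv> max C (1 / c) * exp (2 * L * (D + 1))"
  shows "emeasure (geodesic_pt m f t) A \<le> ennreal \<kappa> * emeasure \<nu> A"
    and "emeasure \<nu> A \<le> ennreal \<kappa> * emeasure (geodesic_pt m f t) A"
proof -
  interpret G: prob_space "geodesic_pt m f t"
    unfolding geodesic_pt_def by (rule prob_space_distr[OF measurable_interp[OF t]])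
  have "finite_borel_measure (geodesic_pt m f t)" "finite_borel_measure \<nu>"
    by (auto simp: finite_borel_measure_def finite_borel_measure_axioms_def geodesic_pt_def
        G.finite_measure_axioms[unfolded geodesic_pt_def] finite_measure_axioms)
  moreover have "0 \<le> \<kappa>" using C_pos by (simp add: \<kappa>_def)
  moreover have "measure (geodesic_pt m f t) {a<..b} \<le> \<kappa> * measure \<nu> {a<..b}"
    and "measure \<nu> {a<..b} \<le> \<kappa> * measure (geodesic_pt m f t) {a<..b}" if "a \<le> b" for a b
  proof -
    let ?a = "inv (interp t) a" and ?b = "inv (interp t) b"
    have "?a \<le> ?b" and S: "interp t ?a = a" "interp t ?b = b"
      using that strict_mono_less_eq[OF interp_strict_mono[OF t], of ?a ?b]
      by (simp_all add: surj_f_inv_f[OF surj_interp[OF t]])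
    note comparison = cdf_interp_comparison[OF t \<open>?a \<le> ?b\<close>, folded \<kappa>_def, unfolded S]
    show "measure (geodesic_pt m f t) {a<..b} \<le> \<kappa> * measure \<nu> {a<..b}"
      "measure \<nu> {a<..b} \<le> \<kappa> * measure (geodesic_pt m f t) {a<..b}"
      using comparison measure_geodesic_pt_Ioc[OF t that] cdf_of_diff[OF finite_measure_axioms that] by simp_all
  qed
  ultimately show "emeasure (geodesic_pt m f t) A \<le> ennreal \<kappa> * emeasure \<nu> A"
    and "emeasure \<nu> A \<le> ennreal \<kappa> * emeasure (geodesic_pt m f t) A"
    using A by (auto intro: emeasure_le_scaled_of_Ioc_le)
qed

lemma geodesic_pt_in_Pab:
  assumes t: "t \<in> {0..1}"
  defines "\<kappa> \<equiv> max C (1 / c) * exp (2 * L * (D + 1))"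
  shows "\<exists>g \<in> Pab (1 / \<kappa>) \<kappa> m. geodesic_pt m f t = lborel_density g"
proof (rule comparable_measure_in_Pab)
  show "prob_space (geodesic_pt m f t)"
    unfolding geodesic_pt_def by (rule prob_space_distr[OF measurable_interp[OF t]])
  show "sets (geodesic_pt m f t) = sets borel"
    by (simp add: geodesic_pt_def)
  have "1 \<le> exp (2 * L * (D + 1))"
    using displacement_nonneg L_nonneg by simp
  moreover have "1 \<le> max C (1 / c)"
    using c_le_1_le_C by (simp add: le_max_iff_disj)
  ultimately show "1 \<le> \<kappa>"
    unfolding \<kappa>_def using mult_mono[of 1 "max C (1 / c)" 1] by simp
qed (use geodesic_pt_comparable[OF t] in \<open>simp_all add: \<kappa>_def\<close>)

end

end

lemma one_less_max_inverse:
  fixes c C :: real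
  assumes "0 < c" and "c < C"
  shows "1 < max C (1 / c)"
  using assms by (cases "c < 1") (auto simp: less_max_iff_disj)

theorem proposition2p8:
  fixes V :: "real \<Rightarrow> real" and L :: real
  assumes "convex_on UNIV V"
    and "L-lipschitz_on UNIV V"
    and "prob_space (density lborel (\<lambda>x. ennreal (exp (- V x))))"
  shows "\<forall>c C. 0 < c \<and> c < C \<longrightarrow>
           (\<exists>c' C'. 0 < c' \<and> c' < C' \<and>
              (\<forall>f \<in> Pab c C (\<lambda>x. exp (- V x)). \<forall>t\<in>{0..1}.
                 \<exists>g \<in> Pab c' C' (\<lambda>x. exp (- V x)).
                   geodesic_pt (\<lambda>x. exp (- V x)) f t = density lborel (\<lambda>x. ennreal (g x))))"
proof (intro allI impI)
  interpret lipschitz_log_concave_prob V L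
    by (intro lipschitz_log_concave_prob.intro log_concave_prob.intro
        lipschitz_log_concave_prob_axioms.intro assms)
  obtain h x\<^sub>1 x\<^sub>2 where h: "0 < h" and tails: "exponential_tails F h x\<^sub>1 x\<^sub>2"
    using exponential_tails_cdf by blast
  fix c C :: real assume cC: "0 < c \<and> c < C"
  define D where "D = \<bar>x\<^sub>2 - x\<^sub>1\<bar> + 2 * (ln (max C (1 / c)) / h)"
  define \<kappa> where "\<kappa> = max C (1 / c) * exp (2 * L * (D + 1))"
  have "1 < max C (1 / c)" using cC by (intro one_less_max_inverse) auto
  then have "1 \<le> exp (2 * L * (D + 1))" using h L_nonneg by (simp add: D_def)
  with \<open>1 < max C (1 / c)\<close> have "1 < \<kappa>"
    unfolding \<kappa>_def using mult_less_le_imp_less[of 1 "max C (1 / c)" 1] by simp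
  show "\<exists>c' C'. 0 < c' \<and> c' < C' \<and> (\<forall>f \<in> Pab c C m. \<forall>t\<in>{0..1}.
          \<exists>g \<in> Pab c' C' m. geodesic_pt m f t = lborel_density g)"
  proof (intro exI conjI ballI)
    show "0 < 1 / \<kappa>" "1 / \<kappa> < \<kappa>"
      using \<open>1 < \<kappa>\<close> less_1_mult[of \<kappa> \<kappa>] by (auto simp: divide_less_eq)
    fix f :: "real \<Rightarrow> real" and t :: real
    assume f: "f \<in> Pab c C m" and t: "t \<in> {0..1}"
    interpret transport_to_comparable_density V L c C f
      using cC f by (intro transport_to_comparable_density.intro lipschitz_log_concave_prob_axioms
          transport_to_comparable_density_axioms.intro) auto
    have displacement: "\<And>x. \<bar>T x - x\<bar> \<le> D"
      unfolding D_def by (rule ot_map_displacement[OF tails h])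
    show "\<exists>g \<in> Pab (1 / \<kappa>) \<kappa> m. geodesic_pt m f t = lborel_density g"
      using geodesic_pt_in_Pab[OF displacement t] by (simp add: \<kappa>_def)
  qed
qed

end
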